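(* Let $X_1,\dots,X_d$ be discrete random variables, $X_j\in\{0,\dots,r_j\}$, fix $M\subseteq\{1,\dots,d\}$, and assume complete independence of $(X_j)_{j\in M}$ with strictly positive joint probability vector $\pi=p(M)$. Let $\mathcal V=\bigcup_k\mathcal P(N_k)$ for a family of subsets $N_k\subsetneq M$, $a,b\subseteq M$ disjoint nonempty, $\mathcal A=\{t\subseteq M: t\cap a\ne\emptyset, t\cap b\ne\emptyset\}$, $\mathcal I\subseteq\mathcal V\cap\mathcal A$ and $\mathcal R=\mathcal V\setminus\mathcal I$. If $\mathcal H$ is a valid replacement for $\mathcal I$, then the matrix $Q_{\mathcal I\mathcal H\mid\mathcal R}=F_{\mathcal I\mathcal H}-F_{\mathcal I\mathcal R}F_{\mathcal R\mathcal R}^{-1}F_{\mathcal R\mathcal H}$ is non singular.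
   Context: $\mathcal P(\cdot)$ denotes the family of nonempty subsets. For $r\subseteq M$, $G_r=\bigotimes_{j\in M}G_j$ with $G_j$ the identity of order $r_j+1$ without its first column if $j\in r$ and $\mathbf 1_{r_j+1}$ otherwise. For disjoint $t,h$ and categories $j_h$ (all nonzero), $G_{t,h}(j_h)$ is the submatrix of $G_{t\cup h}$ formed by the columns with the variables in $h$ equal to $j_h$. $G_{\mathcal I}$ (resp. $G_{\mathcal R}$) juxtaposes $G_t$ for $t\in\mathcal I$ (resp. $\mathcal R$); $G_{\mathcal H}$ juxtaposes the blocks $G_{t,h}(j_h)$ for the elements $t\cup h$ of $\mathcal H$. $\Omega=\mathrm{diag}(\pi)-\pi\pi'$, $F_{\mathcal X\mathcal Y}=G_{\mathcal X}'\Omega G_{\mathcal Y}$. Let $\mathcal K$ be the family of maximal sets of $\mathcal I\cup\mathcal R$; for $t\in\mathcal I$, $\mathcal K(t)=\{m\in\mathcal K:t\subseteq m\}$, $\mathcal K(t,h)$ is the family of nonempty $\mathcal G\subseteq\mathcal K(t)$ with $h\cap\bigcap_{m\in\mathcal G}m=\emptyset$, and $\bar{\mathcal K}(t,h)=\mathcal P(\mathcal K)\setminus\mathcal K(t,h)$. $\mathcal H$ is a valid replacement for $\mathcal I$ if: (i) there is a one-to-one correspondence between $\mathcal I$ and $\mathcal H$ such that each $t\in\mathcal I$ corresponds to some $t\cup h\in\mathcal H$ with $t\cap h=\emptyset$, the variables of $h$ being fixed to given categories $j_h$ different from the reference category $0$; (ii) $\sum_{\mathcal G\in\mathcal K(t,h)}(-1)^{|\mathcal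 G|}\ne0$ for each such pair; (iii) there is a total order $\prec$ on $\mathcal I$ compatible with set inclusion such that for every $t\cup h\in\mathcal H$ and $\mathcal G\in\bar{\mathcal K}(t,h)$, the set $s=(\bigcap_{m\in\mathcal G}m)\cap(t\cup h)$ satisfies either $s\in\mathcal R$, or $s\in\mathcal I$ and $s\prec t$. *)

theory Defs
  imports Complex_Main "HOL-Combinatorics.Permutations"
begin

(* Cells of the contingency table of the variables in M: configurations
   x with x j in {0..r j} for j in M, and x j = 0 (dummy) outside M. *)
definition cells :: "(nat \<Rightarrow> nat) \<Rightarrow> nat set \<Rightarrow> (nat \<Rightarrow> nat) set" where
  "cells r M = {x. (\<forall>j\<in>M. x j \<le> r j) \<and> (\<forall>j. j \<notin> M \<longrightarrow> x j = 0)}"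

(* Column labels of G_t: non-reference categories c j in {1..r j} for j in t. *)
definition tcols :: "(nat \<Rightarrow> nat) \<Rightarrow> nat set \<Rightarrow> (nat \<Rightarrow> nat) set" where
  "tcols r t = {c. (\<forall>j\<in>t. 1 \<le> c j \<and> c j \<le> r j) \<and> (\<forall>j. j \<notin> t \<longrightarrow> c j = 0)}"

definition fcols :: "(nat \<Rightarrow> nat) \<Rightarrow> nat set set \<Rightarrow> (nat set \<times> (nat \<Rightarrow> nat)) set" where
  "fcols r X = {(t, c). t \<in> X \<and> c \<in> tcols r t}"

(* Entry (x, c) of G_t = Kronecker product of the reduced identities
   (j in t) and ones vectors (j not in t). *)
definition Gmat :: "nat set \<Rightarrow> (nat \<Rightarrow> nat) \<Rightarrow> (nat \<Rightarrow> nat) \<Rightarrow> real" where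
  "Gmat t x c = (if \<forall>j\<in>t. x j = c j then 1 else 0)"

(* G_X for a family X: juxtaposition of the G_t, t in X. *)
definition Gfam :: "(nat \<Rightarrow> nat) \<Rightarrow> (nat set \<times> (nat \<Rightarrow> nat)) \<Rightarrow> real" where
  "Gfam x tc = Gmat (fst tc) x (snd tc)"

(* G_H: the block for t in I is G_{t,h t}(jh t), i.e. the columns of
   G_{t \<union> h t} in which the variables of h t equal jh t. *)
definition GH :: "(nat set \<Rightarrow> nat set) \<Rightarrow> (nat set \<Rightarrow> nat \<Rightarrow> nat)
      \<Rightarrow> (nat \<Rightarrow> nat) \<Rightarrow> (nat set \<times> (nat \<Rightarrow> nat)) \<Rightarrow> real" where
  "GH h jh x tc = Gmat (fst tc) x (snd tc) * Gmat (h (fst tc)) x (jh (fst tc))"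

definition Omega :: "((nat \<Rightarrow> nat) \<Rightarrow> real) \<Rightarrow> (nat \<Rightarrow> nat) \<Rightarrow> (nat \<Rightarrow> nat) \<Rightarrow> real" where
  "Omega \<pi> x y = (if x = y then \<pi> x else 0) - \<pi> x * \<pi> y"

definition Fmat :: "(nat \<Rightarrow> nat) set \<Rightarrow> ((nat \<Rightarrow> nat) \<Rightarrow> real)
      \<Rightarrow> ((nat \<Rightarrow> nat) \<Rightarrow> 'a \<Rightarrow> real) \<Rightarrow> ((nat \<Rightarrow> nat) \<Rightarrow> 'b \<Rightarrow> real)
      \<Rightarrow> 'a \<Rightarrow> 'b \<Rightarrow> real" where
  "Fmat C \<pi> GX GY i k = (\<Sum>x\<in>C. \<Sum>y\<in>C. GX x i * Omega \<pi> x y * GY y k)"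

definition inv_on :: "'a set \<Rightarrow> ('a \<Rightarrow> 'a \<Rightarrow> real) \<Rightarrow> 'a \<Rightarrow> 'a \<Rightarrow> real" where
  "inv_on S A = (SOME B. \<forall>i\<in>S. \<forall>k\<in>S.
       (\<Sum>j\<in>S. A i j * B j k) = (if i = k then 1 else 0) \<and>
       (\<Sum>j\<in>S. B i j * A j k) = (if i = k then 1 else 0))"

definition det_on :: "'a set \<Rightarrow> ('a \<Rightarrow> 'a \<Rightarrow> real) \<Rightarrow> real" where
  "det_on S A = (\<Sum>p\<in>{p. p permutes S}. of_int (sign p) * (\<Prod>i\<in>S. A i (p i)))"

definition nonsingular_on :: "'a set \<Rightarrow> ('a \<Rightarrow> 'a \<Rightarrow> real) \<Rightarrow> bool" where
  "nonsingular_on S A \<longleftrightarrow> det_on S A \<noteq> 0"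

definition Pne :: "'a set \<Rightarrow> 'a set set" where
  "Pne A = {B. B \<subseteq> A \<and> B \<noteq> {}}"

definition maximal_sets :: "'a set set \<Rightarrow> 'a set set" where
  "maximal_sets V = {m \<in> V. \<not> (\<exists>m'\<in>V. m \<subset> m')}"

definition Kt :: "'a set set \<Rightarrow> 'a set \<Rightarrow> 'a set set" where
  "Kt K t = {m \<in> K. t \<subseteq> m}"

definition Kth :: "'a set set \<Rightarrow> 'a set \<Rightarrow> 'a set \<Rightarrow> 'a set set set" where
  "Kth K t h = {G. G \<noteq> {} \<and> G \<subseteq> Kt K t \<and> h \<inter> \<Inter>G = {}}"

definition Kbar :: "'a set set \<Rightarrow> 'a set \<Rightarrow> 'a set \<Rightarrow> 'a set set set" where
  "Kbar K t h = Pne K - Kth K t h"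

(* H (given by t \<mapsto> t \<union> h t with categories jh t on h t) is a valid
   replacement for I, with respect to R and the maximal sets of I \<union> R. *)
definition valid_replacement ::
  "(nat \<Rightarrow> nat) \<Rightarrow> nat set \<Rightarrow> nat set set \<Rightarrow> nat set set
     \<Rightarrow> (nat set \<Rightarrow> nat set) \<Rightarrow> (nat set \<Rightarrow> nat \<Rightarrow> nat) \<Rightarrow> bool" where
  "valid_replacement r M I R h jh \<longleftrightarrow>
     (let K = maximal_sets (I \<union> R) in
       \<comment> \<open>(i)\<close>
       inj_on (\<lambda>t. t \<union> h t) I \<and>
       (\<forall>t\<in>I. h t \<subseteq> M \<and> t \<inter> h t = {} \<and>
              (\<forall>j\<in>h t. 1 \<le> jh t j \<and> jh t j \<le> r j) \<and>
              (\<forall>j. j \<notin> h t \<longrightarrow> jh t j = 0)) \<and>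
       \<comment> \<open>(ii)\<close>
       (\<forall>t\<in>I. (\<Sum>G\<in>Kth K t (h t). (-1::int) ^ card G) \<noteq> 0) \<and>
       \<comment> \<open>(iii)\<close>
       (\<exists>ord. ord \<subseteq> I \<times> I \<and> strict_linear_order_on I ord \<and>
          (\<forall>s\<in>I. \<forall>t\<in>I. s \<subset> t \<longrightarrow> (s, t) \<in> ord) \<and>
          (\<forall>t\<in>I. \<forall>G\<in>Kbar K t (h t).
             let s = (\<Inter>G) \<inter> (t \<union> h t) in s \<in> R \<or> (s \<in> I \<and> (s, t) \<in> ord))))"

end

theory Submission
  imports Defs "Jordan_Normal_Form.Determinant"
begin

text \<open>Read F_XY as the covariance matrix, under \<pi>, of the indicator columns of G_X and G_Y.
  The Schur complement Q is then cov(\<rho>_i, g_k), where \<rho>_i is the residual of the i-th column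
  of G_I after projection onto the span of the columns of G_R and g_k is the k-th column of G_H.
  By independence, cov(1[x_A = a], 1[x_u = b]) depends on A only through A \<inter> u, so
  inclusion-exclusion over the maximal sets of I \<union> R, one of which contains u, shows that g_k
  has the same covariances with all columns of G_{I \<union> R} as a combination \<Sum>_v U v k (column v).
  Hence Q = (cov(\<rho>_i, \<rho>_v)) U. The first factor is the Gram matrix of the residuals, which
  are linearly independent modulo constants because the columns of G_{I \<union> R} are; as \<pi> > 0 it
  is nonsingular. Conditions (ii) and (iii) make U triangular for \<prec> with nonzero diagonal.\<close>

section \<open>Square matrices indexed by a finite set\<close>

lemma sum_mult_assoc:
  fixes x :: "'a \<Rightarrow> 'c::comm_semiring_0"
  shows "(\<Sum>l\<in>B. (\<Sum>j\<in>A. x j * M j l) * y l) = (\<Sum>j\<in>A. x j * (\<Sum>l\<in>B. M j l * y l))"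
  by (simp add: sum_distrib_left sum_distrib_right mult.assoc) (rule sum.swap)

definition trivial_kernel_on :: "'a set \<Rightarrow> ('a \<Rightarrow> 'a \<Rightarrow> real) \<Rightarrow> bool" where
  "trivial_kernel_on S A \<longleftrightarrow> (\<forall>\<beta>. (\<forall>i\<in>S. (\<Sum>k\<in>S. A i k * \<beta> k) = 0) \<longrightarrow> (\<forall>k\<in>S. \<beta> k = 0))"

definition inverse_on :: "'a set \<Rightarrow> ('a \<Rightarrow> 'a \<Rightarrow> real) \<Rightarrow> ('a \<Rightarrow> 'a \<Rightarrow> real) \<Rightarrow> bool" where
  "inverse_on S A B \<longleftrightarrow> (\<forall>i\<in>S. \<forall>k\<in>S.
       (\<Sum>j\<in>S. A i j * B j k) = (if i = k then 1 else 0) \<and>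
       (\<Sum>j\<in>S. B i j * A j k) = (if i = k then 1 else 0))"

lemma trivial_kernel_onD:
  "trivial_kernel_on S A \<Longrightarrow> (\<And>i. i \<in> S \<Longrightarrow> (\<Sum>k\<in>S. A i k * \<beta> k) = 0) \<Longrightarrow> k \<in> S \<Longrightarrow> \<beta> k = 0"
  unfolding trivial_kernel_on_def by blast

lemma trivial_kernel_on_mult:
  assumes "trivial_kernel_on S B" and "trivial_kernel_on S U"
  shows "trivial_kernel_on S (\<lambda>i k. \<Sum>v\<in>S. B i v * U v k)"
  unfolding trivial_kernel_on_def
proof (intro allI impI)
  fix \<beta> assume "\<forall>i\<in>S. (\<Sum>k\<in>S. (\<Sum>v\<in>S. B i v * U v k) * \<beta> k) = 0"
  then have "\<forall>i\<in>S. (\<Sum>v\<in>S. B i v * (\<Sum>k\<in>S. U v k * \<beta> k)) = 0"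
    by (simp add: sum_mult_assoc)
  then have "\<forall>v\<in>S. (\<Sum>k\<in>S. U v k * \<beta> k) = 0"
    using trivial_kernel_onD[OF assms(1), of "\<lambda>v. \<Sum>k\<in>S. U v k * \<beta> k"] by blast
  then show "\<forall>k\<in>S. \<beta> k = 0"
    using assms(2) unfolding trivial_kernel_on_def by blast
qed

lemma trivial_kernel_on_triangular:
  assumes S: "finite S" and wf: "wf (ord\<inverse>)"
    and upper: "\<And>v k. v \<in> S \<Longrightarrow> k \<in> S \<Longrightarrow> v \<noteq> k \<Longrightarrow> U v k \<noteq> 0 \<Longrightarrow> (key v, key k) \<in> ord"
    and diag: "\<And>k. k \<in> S \<Longrightarrow> U k k \<noteq> 0"
  shows "trivial_kernel_on S U"
  unfolding trivial_kernel_on_def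
proof (intro allI impI ballI)
  fix \<beta> k assume H: "\<forall>v\<in>S. (\<Sum>k\<in>S. U v k * \<beta> k) = 0" and "k \<in> S"
  have "\<beta> k = 0" if "k \<in> S" "key k = t" for t k
    using that
  proof (induction t arbitrary: k rule: wf_induct_rule[OF wf])
    case (1 t k)
    have "U k j * \<beta> j = 0" if "j \<in> S - {k}" for j
      using 1 that upper[of k j] by fastforce
    then have "(\<Sum>j\<in>S - {k}. U k j * \<beta> j) = 0"
      by (intro sum.neutral) blast
    then have "(\<Sum>j\<in>S. U k j * \<beta> j) = U k k * \<beta> k"
      using sum.remove[OF S \<open>k \<in> S\<close>, of "\<lambda>j. U k j * \<beta> j"] by simp
    then show ?case using H diag \<open>k \<in> S\<close> by simp
  qed
  then show "\<beta> k = 0" using \<open>k \<in> S\<close> by blast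
qed

lemma det_on_reindex:
  assumes T: "finite T" and f: "bij_betw f T S"
  shows "det_on S A = det_on T (\<lambda>i j. A (f i) (f j))"
proof -
  define f' where "f' = inv_into T f"
  have f'f: "\<And>x. x \<in> T \<Longrightarrow> f' (f x) = x" and ff': "\<And>x. x \<in> S \<Longrightarrow> f (f' x) = x"
    using f unfolding f'_def by (auto simp: bij_betw_inv_into_left bij_betw_inv_into_right)
  have f': "bij_betw f' S T"
    using f unfolding f'_def by (rule bij_betw_inv_into)
  have S: "finite S"
    using T f bij_betw_finite by blast
  define pull where "pull q = (\<lambda>x. if x \<in> T then f' (q (f x)) else x)" for q
  define push where "push p = (\<lambda>x. if x \<in> S then f (p (f' x)) else x)" for p
  have pull: "pull q permutes T \<and> sign (pull q) = sign q" if "q permutes S" for q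
  proof -
    have l: "permutes_bij_finite q S T f' f"
      by unfold_locales (use that f' ff' S in auto)
    show ?thesis
      using permutes_bij.permutes_p'[OF permutes_bij_finite.axioms(1)[OF l]]
        permutes_bij_finite.sign_p'[OF l]
      unfolding pull_def by simp
  qed
  have push: "push p permutes S" if "p permutes T" for p
  proof -
    have l: "permutes_bij p T S f f'"
      by unfold_locales (use that f f'f in auto)
    show ?thesis
      using permutes_bij.permutes_p'[OF l] unfolding push_def by simp
  qed
  show ?thesis
    unfolding det_on_def
  proof (rule sum.reindex_bij_witness[where j = pull and i = push])
    fix q assume "q \<in> {q. q permutes S}"
    then have q: "q permutes S" by simp
    show "push (pull q) = q"
      using q bij_betwE[OF f'] ff' permutes_in_image[OF q] permutes_not_in[OF q]
      unfolding push_def pull_def by (auto intro!: ext)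
    show "pull q \<in> {p. p permutes T}" using pull[OF q] by simp
    have "(\<Prod>i\<in>T. A (f i) (f (pull q i))) = (\<Prod>i\<in>T. A (f i) (q (f i)))"
      using bij_betwE[OF f] ff' permutes_in_image[OF q] unfolding pull_def
      by (intro prod.cong) auto
    also have "\<dots> = (\<Prod>x\<in>S. A x (q x))"
      using prod.reindex_bij_betw[OF f, of "\<lambda>x. A x (q x)"] by simp
    finally show "of_int (sign (pull q)) * (\<Prod>i\<in>T. A (f i) (f (pull q i))) =
        of_int (sign q) * (\<Prod>x\<in>S. A x (q x))"
      using pull[OF q] by simp
  next
    fix p assume "p \<in> {p. p permutes T}"
    then have p: "p permutes T" by simp
    show "pull (push p) = p"
      using p bij_betwE[OF f] f'f permutes_in_image[OF p] permutes_not_in[OF p]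
      unfolding push_def pull_def by (auto intro!: ext)
    show "push p \<in> {q. q permutes S}" using push[OF p] by simp
  qed
qed

lemma det_mat_eq_det_on: "det (mat n n (\<lambda>(i, j). B i j)) = det_on {0..<n} B"
  unfolding det_on_def
  by (subst det_def') (auto intro!: sum.cong prod.cong dest: permutes_in_image)

lemma trivial_kernel_on_reindex:
  assumes f: "bij_betw f T S" and A: "trivial_kernel_on S A"
  shows "trivial_kernel_on T (\<lambda>i j. A (f i) (f j))"
  unfolding trivial_kernel_on_def
proof (intro allI impI ballI)
  fix \<beta> k assume H: "\<forall>i\<in>T. (\<Sum>j\<in>T. A (f i) (f j) * \<beta> j) = 0" and k: "k \<in> T"
  define f' where "f' = inv_into T f"
  have f'f: "\<And>x. x \<in> T \<Longrightarrow> f' (f x) = x" and ff': "\<And>x. x \<in> S \<Longrightarrow> f (f' x) = x"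
    using f unfolding f'_def by (auto simp: bij_betw_inv_into_left bij_betw_inv_into_right)
  have "(\<Sum>y\<in>S. A x y * \<beta> (f' y)) = 0" if x: "x \<in> S" for x
  proof -
    have "(\<Sum>y\<in>S. A x y * \<beta> (f' y)) = (\<Sum>j\<in>T. A (f (f' x)) (f j) * \<beta> j)"
      using sum.reindex_bij_betw[OF f, of "\<lambda>y. A x y * \<beta> (f' y)"] f'f ff'[OF x] by simp
    also have "\<dots> = 0"
    proof -
      have "f' x \<in> T"
        using inv_into_into[of x f T] bij_betw_imp_surj_on[OF f] x unfolding f'_def by simp
      then show ?thesis using H by blast
    qed
    finally show ?thesis .
  qed
  then have "\<beta> (f' (f k)) = 0"
    by (rule trivial_kernel_onD[OF A]) (use bij_betwE[OF f] k in auto)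
  then show "\<beta> k = 0" using f'f[OF k] by simp
qed

lemma det_mat_nonzero_if_trivial_kernel:
  assumes "trivial_kernel_on {0..<n} B"
  shows "det (mat n n (\<lambda>(i, j). B i j)) \<noteq> 0"
proof
  assume "det (mat n n (\<lambda>(i, j). B i j)) = 0"
  then obtain v where v: "v \<in> carrier_vec n" "v \<noteq> 0\<^sub>v n" "mat n n (\<lambda>(i, j). B i j) *\<^sub>v v = 0\<^sub>v n"
    using det_0_iff_vec_prod_zero[of "mat n n (\<lambda>(i, j). B i j)" n] by auto
  have "(\<Sum>k\<in>{0..<n}. B i k * v $ k) = 0" if "i \<in> {0..<n}" for i
    using that v(1) arg_cong[OF v(3), of "\<lambda>w. w $ i"] by (simp add: scalar_prod_def)
  then have "v $ k = 0" if "k \<in> {0..<n}" for k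
    using trivial_kernel_onD[OF assms] that by blast
  then have "v = 0\<^sub>v n" using v(1) by (intro eq_vecI) auto
  with v(2) show False ..
qed

lemma nonsingular_on_if_trivial_kernel:
  assumes S: "finite S" and A: "trivial_kernel_on S A"
  shows "nonsingular_on S A"
proof -
  obtain f where f: "bij_betw f {0..<card S} S"
    using ex_bij_betw_nat_finite[OF S] by blast
  have "det (mat (card S) (card S) (\<lambda>(i, j). A (f i) (f j))) \<noteq> 0"
    using det_mat_nonzero_if_trivial_kernel[OF trivial_kernel_on_reindex[OF f A]] by simp
  then show ?thesis
    unfolding nonsingular_on_def det_on_reindex[OF finite_atLeastLessThan f] det_mat_eq_det_on
      by simp
qed

lemma inv_on_inverse:
  assumes "inverse_on S A B"
  shows "inverse_on S A (inv_on S A)"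
proof -
  have "inv_on S A = (SOME B. inverse_on S A B)"
    unfolding inv_on_def inverse_on_def ..
  then show ?thesis using someI[of "inverse_on S A", OF assms] by simp
qed

lemma inverse_on_if_trivial_kernel:
  assumes S: "finite S" and A: "trivial_kernel_on S A"
  shows "inverse_on S A (inv_on S A)"
proof -
  define n where "n = card S"
  obtain f where f: "bij_betw f {0..<n} S"
    using ex_bij_betw_nat_finite[OF S] unfolding n_def by blast
  define f' where "f' = inv_into {0..<n} f"
  have f'f: "\<And>x. x < n \<Longrightarrow> f' (f x) = x" and ff': "\<And>x. x \<in> S \<Longrightarrow> f (f' x) = x"
    using f unfolding f'_def by (auto simp: bij_betw_inv_into_left bij_betw_inv_into_right)
  have f'n: "\<And>x. x \<in> S \<Longrightarrow> f' x < n"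
    using bij_betwE[OF bij_betw_inv_into[OF f]] unfolding f'_def by auto
  define B where "B = mat n n (\<lambda>(i, j). A (f i) (f j))"
  have B: "B \<in> carrier_mat n n" unfolding B_def by simp
  have "det B \<noteq> 0"
    unfolding B_def
      by (rule det_mat_nonzero_if_trivial_kernel[OF trivial_kernel_on_reindex[OF f A]])
  from det_non_zero_imp_unit[OF B this, of "()"]
  obtain C where C: "C \<in> carrier_mat n n" "C * B = 1\<^sub>m n" "B * C = 1\<^sub>m n"
    unfolding Units_def ring_mat_def by auto
  have reindex: "(\<Sum>x\<in>S. g x) = (\<Sum>j = 0..<n. g (f j))" for g :: "_ \<Rightarrow> real"
    using sum.reindex_bij_betw[OF f, of g] by simp
  have "inverse_on S A (\<lambda>x y. C $$ (f' x, f' y))"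
    unfolding inverse_on_def
  proof (intro ballI conjI)
    fix i k assume i: "i \<in> S" and k: "k \<in> S"
    have eq: "f' i = f' k \<longleftrightarrow> i = k" using ff' i k by metis
    have "(\<Sum>j\<in>S. A i j * C $$ (f' j, f' k)) = (B * C) $$ (f' i, f' k)"
      unfolding reindex using f'n[OF i] f'n[OF k] C(1) f'f
      by (simp add: B_def scalar_prod_def ff'[OF i])
    then show "(\<Sum>j\<in>S. A i j * C $$ (f' j, f' k)) = (if i = k then 1 else 0)"
      using C(3) f'n[OF i] f'n[OF k] eq by simp
    have "(\<Sum>j\<in>S. C $$ (f' i, f' j) * A j k) = (C * B) $$ (f' i, f' k)"
      unfolding reindex using f'n[OF i] f'n[OF k] C(1) f'f
      by (simp add: B_def scalar_prod_def ff'[OF k])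
    then show "(\<Sum>j\<in>S. C $$ (f' i, f' j) * A j k) = (if i = k then 1 else 0)"
      using C(2) f'n[OF i] f'n[OF k] eq by simp
  qed
  then show ?thesis by (rule inv_on_inverse)
qed

section \<open>Covariances and Schur complements\<close>

locale finite_distribution =
  fixes C :: "'a set" and \<pi> :: "'a \<Rightarrow> real"
  assumes finite_C: "finite C"
    and pos: "\<And>x. x \<in> C \<Longrightarrow> 0 < \<pi> x"
    and sum_one: "(\<Sum>x\<in>C. \<pi> x) = 1"
begin

definition expect :: "('a \<Rightarrow> real) \<Rightarrow> real" where
  "expect f = (\<Sum>x\<in>C. \<pi> x * f x)"

definition cov :: "('a \<Rightarrow> real) \<Rightarrow> ('a \<Rightarrow> real) \<Rightarrow> real" where
  "cov f g = expect (\<lambda>x. f x * g x) - expect f * expect g"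

definition independent_mod_constants :: "'b set \<Rightarrow> ('b \<Rightarrow> 'a \<Rightarrow> real) \<Rightarrow> bool" where
  "independent_mod_constants S f \<longleftrightarrow>
     (\<forall>\<alpha> c. (\<forall>x\<in>C. (\<Sum>w\<in>S. \<alpha> w * f w x) = c) \<longrightarrow> (\<forall>w\<in>S. \<alpha> w = 0))"

lemma cov_eq_double_sum:
  "(\<Sum>x\<in>C. \<Sum>y\<in>C. f x * ((if x = y then \<pi> x else 0) - \<pi> x * \<pi> y) * g y) = cov f g"
proof -
  have "f x * ((if x = y then \<pi> x else 0) - \<pi> x * \<pi> y) * g y =
      (if x = y then \<pi> x * (f x * g y) else 0) - (\<pi> x * f x) * (\<pi> y * g y)" for x y
    by (simp add: algebra_simps)
  then have "(\<Sum>x\<in>C. \<Sum>y\<in>C. f x * ((if x = y then \<pi> x else 0) - \<pi> x * \<pi> y) * g y) =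
      (\<Sum>x\<in>C. \<pi> x * (f x * g x) - (\<pi> x * f x) * (\<Sum>y\<in>C. \<pi> y * g y))"
    by (simp add: sum_subtractf sum.delta finite_C sum_distrib_left)
  also have "\<dots> = expect (\<lambda>x. f x * g x) - expect f * expect g"
    unfolding expect_def by (simp add: sum_subtractf sum_distrib_right)
  finally show ?thesis unfolding cov_def .
qed

lemma cov_sym: "cov f g = cov g f"
  unfolding cov_def by (simp add: mult.commute)

lemma expect_sum: "expect (\<lambda>x. \<Sum>i\<in>S. c i * f i x) = (\<Sum>i\<in>S. c i * expect (f i))"
proof -
  have "(\<Sum>x\<in>C. \<pi> x * (\<Sum>i\<in>S. c i * f i x)) = (\<Sum>x\<in>C. \<Sum>i\<in>S. c i * (\<pi> x * f i x))"
    by (simp add: sum_distrib_left mult.left_commute)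
  also have "\<dots> = (\<Sum>i\<in>S. c i * (\<Sum>x\<in>C. \<pi> x * f i x))"
    by (subst sum.swap) (simp add: sum_distrib_left)
  finally show ?thesis unfolding expect_def .
qed

lemma cov_sum_left: "cov (\<lambda>x. \<Sum>i\<in>S. c i * f i x) g = (\<Sum>i\<in>S. c i * cov (f i) g)"
proof -
  have "expect (\<lambda>x. (\<Sum>i\<in>S. c i * f i x) * g x) = (\<Sum>i\<in>S. c i * expect (\<lambda>x. f i x * g x))"
    using expect_sum[of c "\<lambda>i x. f i x * g x"] by (simp add: sum_distrib_right mult.assoc)
  then show ?thesis
    unfolding cov_def expect_sum
    by (simp add: sum_distrib_right sum_subtractf right_diff_distrib mult.assoc)
qed

lemma cov_sum_right: "cov g (\<lambda>x. \<Sum>i\<in>S. c i * f i x) = (\<Sum>i\<in>S. c i * cov g (f i))"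
  using cov_sum_left[of c f S g] by (simp add: cov_sym)

lemma cov_diff_left: "cov (\<lambda>x. f x - g x) h = cov f h - cov g h"
  unfolding cov_def expect_def by (simp add: algebra_simps sum_subtractf)

lemma cov_diff_right: "cov h (\<lambda>x. f x - g x) = cov h f - cov h g"
  using cov_diff_left[of f g h] by (simp add: cov_sym)

lemma cov_self_eq_0_imp_const:
  assumes "cov f f = 0" and "x \<in> C"
  shows "f x = expect f"
proof -
  define m where "m = expect f"
  have "\<pi> y * (f y - m)\<^sup>2 = \<pi> y * (f y * f y) - 2 * m * (\<pi> y * f y) + m\<^sup>2 * \<pi> y" for y
    by (simp add: power2_eq_square algebra_simps)
  then have "(\<Sum>y\<in>C. \<pi> y * (f y - m)\<^sup>2) =
      expect (\<lambda>y. f y * f y) - 2 * m * expect f + m\<^sup>2 * (\<Sum>y\<in>C. \<pi> y)"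
    unfolding expect_def by (simp only: sum.distrib sum_subtractf sum_distrib_left)
  also have "\<dots> = cov f f"
    unfolding cov_def m_def sum_one by (simp add: power2_eq_square)
  finally have "(\<Sum>y\<in>C. \<pi> y * (f y - m)\<^sup>2) = 0" using assms(1) by simp
  moreover have "\<forall>y\<in>C. 0 \<le> \<pi> y * (f y - m)\<^sup>2" using pos by (simp add: less_imp_le)
  ultimately have "\<pi> x * (f x - m)\<^sup>2 = 0"
    using sum_nonneg_eq_0_iff[OF finite_C, of "\<lambda>y. \<pi> y * (f y - m)\<^sup>2"] assms(2) by blast
  then show ?thesis using pos[OF assms(2)] unfolding m_def by simp
qed

lemma independent_mod_constantsD:
  "independent_mod_constants S f \<Longrightarrow> (\<And>x. x \<in> C \<Longrightarrow> (\<Sum>w\<in>S. \<alpha> w * f w x) = c)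
     \<Longrightarrow> w \<in> S \<Longrightarrow> \<alpha> w = 0"
  unfolding independent_mod_constants_def by blast

lemma independent_mod_constants_subset:
  assumes "independent_mod_constants S f" "T \<subseteq> S" "finite S"
  shows "independent_mod_constants T f"
  unfolding independent_mod_constants_def
proof (intro allI impI ballI)
  fix \<alpha> c w assume H: "\<forall>x\<in>C. (\<Sum>w\<in>T. \<alpha> w * f w x) = c" and "w \<in> T"
  have "(\<Sum>v\<in>S. (if v \<in> T then \<alpha> v else 0) * f v x) = c" if "x \<in> C" for x
  proof -
    have "(\<Sum>v\<in>S. (if v \<in> T then \<alpha> v else 0) * f v x) = (\<Sum>v\<in>S \<inter> T. \<alpha> v * f v x)"
      by (subst sum.inter_restrict[OF assms(3)]) (auto intro!: sum.cong)
    then show ?thesis using H that Int_absorb1[OF assms(2)] by simp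
  qed
  then have "(if w \<in> T then \<alpha> w else 0) = 0"
    using independent_mod_constantsD[OF assms(1), of "\<lambda>v. if v \<in> T then \<alpha> v else 0"]
      \<open>w \<in> T\<close> assms(2) by blast
  then show "\<alpha> w = 0" using \<open>w \<in> T\<close> by simp
qed

lemma trivial_kernel_on_gram:
  assumes "independent_mod_constants S f"
  shows "trivial_kernel_on S (\<lambda>l m. cov (f l) (f m))"
  unfolding trivial_kernel_on_def
proof (intro allI impI)
  fix \<alpha> assume H: "\<forall>l\<in>S. (\<Sum>m\<in>S. cov (f l) (f m) * \<alpha> m) = 0"
  define g where "g x = (\<Sum>m\<in>S. \<alpha> m * f m x)" for x
  have "cov g g = (\<Sum>l\<in>S. \<alpha> l * (\<Sum>m\<in>S. cov (f l) (f m) * \<alpha> m))"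
    unfolding g_def cov_sum_left cov_sum_right by (simp add: mult.commute)
  also have "\<dots> = 0" using H by simp
  finally have "cov g g = 0" .
  then have "(\<Sum>m\<in>S. \<alpha> m * f m x) = expect g" if "x \<in> C" for x
    using cov_self_eq_0_imp_const[OF _ that] unfolding g_def by simp
  then show "\<forall>m\<in>S. \<alpha> m = 0"
    using independent_mod_constantsD[OF assms, of \<alpha>] by blast
qed

text \<open>With W the inverse Gram matrix of the f l, l \<in> SR, this is f i minus its
  covariance projection onto their span.\<close>
definition residual :: "'b set \<Rightarrow> ('b \<Rightarrow> 'b \<Rightarrow> real) \<Rightarrow> ('b \<Rightarrow> 'a \<Rightarrow> real) \<Rightarrow> 'b \<Rightarrow> 'a \<Rightarrow> real" where
  "residual SR W f i = (\<lambda>x. f i x - (\<Sum>l\<in>SR. (\<Sum>j\<in>SR. cov (f i) (f j) * W j l) * f l x))"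

lemma cov_residual_left:
  "cov (residual SR W f i) g =
     cov (f i) g - (\<Sum>l\<in>SR. (\<Sum>j\<in>SR. cov (f i) (f j) * W j l) * cov (f l) g)"
  unfolding residual_def cov_diff_left cov_sum_left ..

lemma schur_complement_eq_cov_residual:
  "cov (f i) g - (\<Sum>j\<in>SR. \<Sum>l\<in>SR. cov (f i) (f j) * W j l * cov (f l) g) = cov (residual SR W f i) g"
proof -
  have "(\<Sum>j\<in>SR. \<Sum>l\<in>SR. cov (f i) (f j) * W j l * cov (f l) g) =
      (\<Sum>l\<in>SR. (\<Sum>j\<in>SR. cov (f i) (f j) * W j l) * cov (f l) g)"
    by (subst sum.swap) (simp add: sum_distrib_right)
  then show ?thesis unfolding cov_residual_left by simp
qed

context
  fixes SR :: "'b set" and W :: "'b \<Rightarrow> 'b \<Rightarrow> real" and f :: "'b \<Rightarrow> 'a \<Rightarrow> real"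
  assumes finite_SR: "finite SR" and W: "inverse_on SR (\<lambda>l m. cov (f l) (f m)) W"
begin

lemma cov_residual_orthogonal:
  assumes "m \<in> SR"
  shows "cov (residual SR W f i) (f m) = 0"
proof -
  have "(\<Sum>l\<in>SR. (\<Sum>j\<in>SR. cov (f i) (f j) * W j l) * cov (f l) (f m)) =
      (\<Sum>j\<in>SR. cov (f i) (f j) * (\<Sum>l\<in>SR. W j l * cov (f l) (f m)))"
    by (rule sum_mult_assoc)
  also have "\<dots> = (\<Sum>j\<in>SR. if j = m then cov (f i) (f j) else 0)"
    using W assms unfolding inverse_on_def by (intro sum.cong) auto
  also have "\<dots> = cov (f i) (f m)"
    using assms finite_SR by simp
  finally show ?thesis unfolding cov_residual_left by simp
qed

lemma cov_residual_residual:
  "cov (residual SR W f i) (residual SR W f v) = cov (residual SR W f i) (f v)"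
  using cov_residual_orthogonal
  unfolding residual_def[of SR W f v] cov_diff_right cov_sum_right by simp

lemma independent_mod_constants_residual:
  assumes indep: "independent_mod_constants (SI \<union> SR) f"
    and SI: "finite SI" and disj: "SI \<inter> SR = {}"
  shows "independent_mod_constants SI (residual SR W f)"
  unfolding independent_mod_constants_def
proof (intro allI impI ballI)
  fix \<gamma> c w assume H: "\<forall>x\<in>C. (\<Sum>v\<in>SI. \<gamma> v * residual SR W f v x) = c" and w: "w \<in> SI"
  define lam where "lam v l = (\<Sum>j\<in>SR. cov (f v) (f j) * W j l)" for v l
  define \<alpha> where "\<alpha> u = (if u \<in> SI then \<gamma> u else - (\<Sum>v\<in>SI. \<gamma> v * lam v u))" for u
  have "(\<Sum>u\<in>SI \<union> SR. \<alpha> u * f u x) = (\<Sum>v\<in>SI. \<gamma> v * residual SR W f v x)" for x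
  proof -
    have "(\<Sum>u\<in>SR. \<alpha> u * f u x) = - (\<Sum>l\<in>SR. \<Sum>v\<in>SI. \<gamma> v * lam v l * f l x)"
      unfolding \<alpha>_def using disj
      by (auto simp: sum_negf[symmetric] sum_distrib_right intro!: sum.cong)
    also have "\<dots> = - (\<Sum>v\<in>SI. \<gamma> v * (\<Sum>l\<in>SR. lam v l * f l x))"
      by (subst sum.swap) (simp add: sum_distrib_left mult.assoc)
    finally have "(\<Sum>u\<in>SR. \<alpha> u * f u x) = - (\<Sum>v\<in>SI. \<gamma> v * (\<Sum>l\<in>SR. lam v l * f l x))" .
    moreover have "(\<Sum>u\<in>SI. \<alpha> u * f u x) = (\<Sum>v\<in>SI. \<gamma> v * f v x)"
      unfolding \<alpha>_def by simp
    ultimately show ?thesis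
      unfolding sum.union_disjoint[OF SI finite_SR disj] residual_def lam_def
      by (simp add: right_diff_distrib sum_subtractf)
  qed
  then have "\<alpha> w = 0"
    using independent_mod_constantsD[OF indep, of \<alpha>] H w by simp
  then show "\<gamma> w = 0" using w unfolding \<alpha>_def by simp
qed

lemma cov_residual_transfer:
  assumes SI: "finite SI" and disj: "SI \<inter> SR = {}" and i: "i \<in> SI \<union> SR"
    and repl: "\<forall>w\<in>SI \<union> SR. cov g (f w) = (\<Sum>v\<in>SI \<union> SR. U v * cov (f v) (f w))"
  shows "cov (residual SR W f i) g = (\<Sum>v\<in>SI. U v * cov (residual SR W f i) (residual SR W f v))"
proof -
  define S where "S = SI \<union> SR"
  define lam where "lam l = (\<Sum>j\<in>SR. cov (f i) (f j) * W j l)" for l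
  have "cov (residual SR W f i) g = cov g (f i) - (\<Sum>l\<in>SR. lam l * cov g (f l))"
    unfolding cov_sym[of _ g] residual_def cov_diff_right cov_sum_right lam_def ..
  also have "\<dots> = (\<Sum>v\<in>S. U v * cov (f v) (f i)) - (\<Sum>l\<in>SR. lam l * (\<Sum>v\<in>S. U v * cov (f v) (f l)))"
    using repl i unfolding S_def by (auto intro!: sum.cong)
  also have "(\<Sum>l\<in>SR. lam l * (\<Sum>v\<in>S. U v * cov (f v) (f l))) =
      (\<Sum>v\<in>S. U v * (\<Sum>l\<in>SR. lam l * cov (f v) (f l)))"
    using sum_mult_assoc[where x = U and M = "\<lambda>v l. cov (f v) (f l)" and y = lam]
      by (simp add: mult_ac)
  also have "(\<Sum>v\<in>S. U v * cov (f v) (f i)) - (\<Sum>v\<in>S. U v * (\<Sum>l\<in>SR. lam l * cov (f v) (f l))) =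
      (\<Sum>v\<in>S. U v * cov (f v) (residual SR W f i))"
    unfolding residual_def cov_diff_right cov_sum_right lam_def
    by (simp add: sum_subtractf right_diff_distrib)
  also have "\<dots> = (\<Sum>v\<in>S. U v * cov (residual SR W f i) (f v))"
    by (intro sum.cong refl arg_cong2[where f = "(*)"] cov_sym)
  also have "\<dots> = (\<Sum>v\<in>SI. U v * cov (residual SR W f i) (f v))"
    unfolding S_def sum.union_disjoint[OF SI finite_SR disj] using cov_residual_orthogonal by simp
  finally show ?thesis using cov_residual_residual by simp
qed

end

lemma schur_complement_nonsingular:
  assumes SI: "finite SI" and SR: "finite SR" and disj: "SI \<inter> SR = {}"
    and indep: "independent_mod_constants (SI \<union> SR) f"
    and repl: "\<forall>k\<in>SI. \<forall>w\<in>SI \<union> SR. cov (g k) (f w) = (\<Sum>v\<in>SI \<union> SR. U v k * cov (f v) (f w))"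
    and U: "trivial_kernel_on SI U"
  shows "nonsingular_on SI (\<lambda>i k. cov (f i) (g k) -
           (\<Sum>j\<in>SR. \<Sum>l\<in>SR.
              cov (f i) (f j) * inv_on SR (\<lambda>l m. cov (f l) (f m)) j l * cov (f l) (g k)))"
proof -
  define W where "W = inv_on SR (\<lambda>l m. cov (f l) (f m))"
  have "independent_mod_constants SR f"
    using independent_mod_constants_subset[OF indep _ finite_UnI[OF SI SR]] by blast
  then have W: "inverse_on SR (\<lambda>l m. cov (f l) (f m)) W"
    unfolding W_def by (intro inverse_on_if_trivial_kernel SR trivial_kernel_on_gram)
  have "cov (f i) (g k) - (\<Sum>j\<in>SR. \<Sum>l\<in>SR. cov (f i) (f j) * W j l * cov (f l) (g k)) =
      (\<Sum>v\<in>SI. cov (residual SR W f i) (residual SR W f v) * U v k)" if "i \<in> SI" "k \<in> SI" for i k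
    using cov_residual_transfer[OF SR W SI disj, of i "g k" "\<lambda>v. U v k"] repl that
    unfolding schur_complement_eq_cov_residual by (simp add: mult.commute)
  moreover have
    "trivial_kernel_on SI (\<lambda>i k. \<Sum>v\<in>SI. cov (residual SR W f i) (residual SR W f v) * U v k)"
    using trivial_kernel_on_mult trivial_kernel_on_gram U
      independent_mod_constants_residual[OF SR W indep SI disj]
    by blast
  ultimately show ?thesis
    unfolding W_def[symmetric]
      by (intro nonsingular_on_if_trivial_kernel SI) (simp add: trivial_kernel_on_def)
qed

end

section \<open>Indicator columns of a contingency table\<close>

lemma cells_eq_image_PiE:
  "cells r M = (\<lambda>g j. if j \<in> M then g j else 0) ` (\<Pi>\<^sub>E j\<in>M. {0..r j})"
proof (rule Set.set_eqI, rule iffI)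
  fix x assume x: "x \<in> cells r M"
  then have "restrict x M \<in> (\<Pi>\<^sub>E j\<in>M. {0..r j})" and "x = (\<lambda>j. if j \<in> M then restrict x M j else 0)"
    by (auto simp: cells_def)
  then show "x \<in> (\<lambda>g j. if j \<in> M then g j else 0) ` (\<Pi>\<^sub>E j\<in>M. {0..r j})" by blast
qed (auto simp: cells_def PiE_iff)

lemma inj_on_extend_PiE: "inj_on (\<lambda>g j. if j \<in> M then g j else 0) (\<Pi>\<^sub>E j\<in>M. {0..r j})"
proof (rule inj_onI)
  fix g1 g2 assume g: "g1 \<in> (\<Pi>\<^sub>E j\<in>M. {0..r j})" "g2 \<in> (\<Pi>\<^sub>E j\<in>M. {0..r j})"
    and eq: "(\<lambda>j. if j \<in> M then g1 j else 0) = (\<lambda>j. if j \<in> M then g2 j else 0)"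
  show "g1 = g2"
  proof (rule PiE_ext[OF g])
    fix j assume "j \<in> M"
    then show "g1 j = g2 j" using fun_cong[OF eq, of j] by simp
  qed
qed

lemma finite_cells: "finite M \<Longrightarrow> finite (cells r M)"
  unfolding cells_eq_image_PiE by (intro finite_imageI finite_PiE) auto

lemma sum_cells_prod:
  fixes q :: "nat \<Rightarrow> nat \<Rightarrow> real"
  assumes "finite M"
  shows "(\<Sum>x\<in>cells r M. \<Prod>j\<in>M. q j (x j)) = (\<Prod>j\<in>M. \<Sum>c\<in>{0..r j}. q j c)"
proof -
  have "(\<Sum>x\<in>cells r M. \<Prod>j\<in>M. q j (x j)) = (\<Sum>g\<in>(\<Pi>\<^sub>E j\<in>M. {0..r j}). \<Prod>j\<in>M. q j (g j))"
    unfolding cells_eq_image_PiE sum.reindex[OF inj_on_extend_PiE]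
      by (auto intro!: sum.cong prod.cong)
  also have "\<dots> = (\<Prod>j\<in>M. \<Sum>c\<in>{0..r j}. q j c)"
    by (rule prod_sum_PiE[symmetric]) (use assms in auto)
  finally show ?thesis .
qed

lemma tcols_subset_cells: "t \<subseteq> M \<Longrightarrow> tcols r t \<subseteq> cells r M"
  by (auto simp: tcols_def cells_def)

lemma finite_fcols:
  assumes "finite M" "finite F" "\<forall>t\<in>F. t \<subseteq> M"
  shows "finite (fcols r F)"
proof -
  have "fcols r F \<subseteq> F \<times> cells r M"
    using tcols_subset_cells assms(3) by (auto simp: fcols_def)
  then show ?thesis
    by (rule finite_subset) (intro finite_cartesian_product assms finite_cells)
qed

lemma fcols_Un: "fcols r (A \<union> B) = fcols r A \<union> fcols r B"
  unfolding fcols_def by auto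

lemma fcols_disjoint: "A \<inter> B = {} \<Longrightarrow> fcols r A \<inter> fcols r B = {}"
  unfolding fcols_def by auto

lemma Gmat_eq_prod: "finite A \<Longrightarrow> Gmat A x a = (\<Prod>j\<in>A. if x j = a j then 1 else 0)"
  by (auto simp: Gmat_def prod_zero_iff)

lemma Gmat_mult:
  "Gmat A x a * Gmat u x b =
     (if \<forall>j\<in>A \<inter> u. a j = b j then Gmat (A \<union> u) x (\<lambda>j. if j \<in> A then a j else b j) else 0)"
  unfolding Gmat_def by auto

lemma Gmat_tcols_nonzero:
  assumes c: "c \<in> tcols r t" and c': "c' \<in> tcols r u" and nz: "Gmat u c c' \<noteq> 0"
  shows "u \<subseteq> t" and "u = t \<Longrightarrow> c' = c"
proof -
  have agree: "\<forall>j\<in>u. c j = c' j" using nz by (auto simp: Gmat_def split: if_splits)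
  show "u \<subseteq> t"
    using agree c c' by (force simp: tcols_def)
  show "c' = c" if "u = t"
  proof
    fix j show "c' j = c j"
      using agree c c' that by (cases "j \<in> t") (auto simp: tcols_def)
  qed
qed

text \<open>Evaluating at the cell c separates the column (t, c) from all columns of sets not
  contained in t, so induction on card t applies.\<close>
lemma Gmat_columns_independent:
  assumes M: "finite M" and F: "finite F" "\<forall>t\<in>F. t \<subseteq> M \<and> t \<noteq> {}"
    and eq: "\<forall>x\<in>cells r M. (\<Sum>w\<in>fcols r F. \<alpha> w * Gmat (fst w) x (snd w)) = \<kappa>"
  shows "\<forall>w\<in>fcols r F. \<alpha> w = 0"
proof -
  have fin: "finite (fcols r F)" using finite_fcols[OF M F(1)] F(2) by blast
  have "Gmat (fst w) (\<lambda>j. 0) (snd w) = 0" if "w \<in> fcols r F" for w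
    using that F(2) by (fastforce simp: fcols_def tcols_def Gmat_def)
  moreover have "(\<lambda>j. 0) \<in> cells r M" by (simp add: cells_def)
  ultimately have \<kappa>: "\<kappa> = 0" using eq by (metis (no_types, lifting) mult_zero_right sum.neutral)
  have "\<alpha> (t, c) = 0" if "(t, c) \<in> fcols r F" for t c
    using that
  proof (induction "card t" arbitrary: t c rule: less_induct)
    case less
    then have t: "t \<in> F" and c: "c \<in> tcols r t" by (auto simp: fcols_def)
    have "\<alpha> w * Gmat (fst w) c (snd w) = (if w = (t, c) then \<alpha> w else 0)"
      if w: "w \<in> fcols r F" for w
    proof -
      obtain u c' where uc: "w = (u, c')" "u \<in> F" "c' \<in> tcols r u" using w by (auto simp: fcols_def)
      show ?thesis
      proof (cases "Gmat u c c' = 0")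
        case False
        have "u \<subseteq> t" using Gmat_tcols_nonzero(1)[OF c uc(3) False] .
        moreover have "finite t" using t F(2) M finite_subset by blast
        ultimately have "u = t \<or> \<alpha> (u, c') = 0"
          using less.hyps[of u c'] psubset_card_mono uc w by blast
        then show ?thesis
          using Gmat_tcols_nonzero(2)[OF c uc(3) False] uc by (auto simp: Gmat_def)
      qed (use uc in \<open>auto simp: Gmat_def\<close>)
    qed
    then have "(\<Sum>w\<in>fcols r F. \<alpha> w * Gmat (fst w) c (snd w)) = \<alpha> (t, c)"
      using less.prems fin by (simp add: sum.delta' cong: sum.cong)
    moreover have "c \<in> cells r M" using c t F(2) tcols_subset_cells by blast
    ultimately show ?case using eq \<kappa> by simp
  qed
  then show ?thesis by auto
qed

definition Gcol :: "nat set \<Rightarrow> (nat \<Rightarrow> nat) \<Rightarrow> nat set \<times> (nat \<Rightarrow> nat)" where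
  "Gcol s a = (s, \<lambda>j. if j \<in> s then a j else 0)"

lemma Gfam_Gcol: "Gfam x (Gcol s a) = Gmat s x a"
  unfolding Gfam_def Gcol_def Gmat_def by simp

lemma Gcol_in_fcols: "s \<in> F \<Longrightarrow> \<forall>j\<in>s. 1 \<le> a j \<and> a j \<le> r j \<Longrightarrow> Gcol s a \<in> fcols r F"
  by (auto simp: Gcol_def fcols_def tcols_def)

lemma Gcol_eq_Gcol_iff: "Gcol s a = Gcol t a \<longleftrightarrow> s = t"
  unfolding Gcol_def by auto

text \<open>The terms for G and insert m G cancel because D \<subseteq> m; only G = {m} survives.\<close>
lemma sum_Pne_Inter_alternating:
  fixes \<Phi> :: "'a set \<Rightarrow> 'b::comm_ring_1"
  assumes K: "finite K" and m: "m \<in> K" and D: "D \<subseteq> m"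
  shows "(\<Sum>G\<in>Pne K. - ((-1) ^ card G) * \<Phi> (\<Inter>G \<inter> D)) = \<Phi> D"
proof -
  define K' where "K' = K - {m}"
  let ?term = "\<lambda>G. - ((-1) ^ card G) * \<Phi> (\<Inter>G \<inter> D)"
  have fin: "finite (Pne K')" "finite (Pow K')"
    using K unfolding K'_def Pne_def by (auto intro: finite_subset[of _ "Pow K"])
  have disj: "Pne K' \<inter> insert m ` Pow K' = {}"
    unfolding K'_def Pne_def by auto
  have split: "Pne K = Pne K' \<union> insert m ` Pow K'"
  proof (rule Set.set_eqI, rule iffI)
    fix G assume G: "G \<in> Pne K"
    show "G \<in> Pne K' \<union> insert m ` Pow K'"
    proof (cases "m \<in> G")
      case True
      then have "G = insert m (G - {m})" by blast
      moreover have "G - {m} \<in> Pow K'" using G unfolding K'_def Pne_def by auto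
      ultimately show ?thesis by blast
    qed (use G in \<open>auto simp: K'_def Pne_def\<close>)
  qed (use m in \<open>auto simp: K'_def Pne_def\<close>)
  have "inj_on (insert m) (Pow K')" unfolding K'_def by (rule inj_onI) (auto simp: insert_ident)
  then have "(\<Sum>G\<in>insert m ` Pow K'. ?term G) = (\<Sum>G\<in>Pow K'. ?term (insert m G))"
    by (rule sum.reindex[unfolded comp_def])
  also have "\<dots> = (\<Sum>G\<in>Pow K'. - ?term G)"
  proof (rule sum.cong[OF refl])
    fix G assume G: "G \<in> Pow K'"
    then have "card (insert m G) = Suc (card G)"
      using K unfolding K'_def by (subst card_insert_disjoint) (auto intro: finite_subset)
    moreover have "\<Inter>(insert m G) \<inter> D = \<Inter>G \<inter> D" using D by auto
    ultimately show "?term (insert m G) = - ?term G" by simp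
  qed
  also have "\<dots> = \<Phi> D - (\<Sum>G\<in>Pne K'. ?term G)"
  proof -
    have "Pow K' = insert {} (Pne K')" unfolding Pne_def by auto
    then show ?thesis using fin(1) by (simp add: Pne_def sum_negf)
  qed
  finally show ?thesis
    unfolding split sum.union_disjoint[OF fin(1) finite_imageI[OF fin(2)] disj] by simp
qed

lemma ex_maximal_set:
  assumes "finite V" "u \<in> V"
  shows "\<exists>m\<in>maximal_sets V. u \<subseteq> m"
proof -
  obtain m where m: "m \<in> V" "u \<subseteq> m" "\<forall>b\<in>V. m \<subseteq> b \<longrightarrow> m = b"
    using finite_has_maximal2[OF assms] by auto
  then have "m \<in> maximal_sets V" unfolding maximal_sets_def by auto
  with m(2) show ?thesis by blast
qed

lemma Kth_Inter: "G \<in> Kth K t h \<Longrightarrow> t \<subseteq> \<Inter>G \<and> h \<inter> \<Inter>G = {}"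
  unfolding Kth_def Kt_def by blast

locale independent_cells = finite_distribution "cells r M" \<pi> for r M \<pi> +
  assumes finite_M: "finite M"
    and indep: "\<And>x. x \<in> cells r M \<Longrightarrow> \<pi> x = (\<Prod>j\<in>M. \<Sum>y\<in>{y\<in>cells r M. y j = x j}. \<pi> y)"
begin

lemma Fmat_eq_cov: "Fmat (cells r M) \<pi> GX GY = (\<lambda>i k. cov (\<lambda>x. GX x i) (\<lambda>x. GY x k))"
  unfolding Fmat_def Omega_def cov_eq_double_sum by (simp add: fun_eq_iff)

definition marginal :: "nat \<Rightarrow> nat \<Rightarrow> real" where
  "marginal j c = (\<Sum>y\<in>{y\<in>cells r M. y j = c}. \<pi> y)"

lemma pi_eq_prod_marginal: "x \<in> cells r M \<Longrightarrow> \<pi> x = (\<Prod>j\<in>M. marginal j (x j))"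
  using indep unfolding marginal_def by simp

lemma sum_marginal: "j \<in> M \<Longrightarrow> (\<Sum>c\<in>{0..r j}. marginal j c) = 1"
proof -
  assume j: "j \<in> M"
  have "(\<Sum>c\<in>{0..r j}. marginal j c) = (\<Sum>y\<in>cells r M. \<Sum>c\<in>{0..r j}. if y j = c then \<pi> y else 0)"
    unfolding marginal_def using finite_C by (subst sum.swap) (simp add: sum.inter_filter)
  also have "\<dots> = (\<Sum>y\<in>cells r M. \<pi> y)"
    using j by (intro sum.cong) (auto simp: cells_def)
  finally show ?thesis using sum_one by simp
qed

lemma marginal_eq_0: "j \<in> M \<Longrightarrow> r j < c \<Longrightarrow> marginal j c = 0"
  unfolding marginal_def by (rule sum.neutral) (auto simp: cells_def)

lemma marginal_pos: "j \<in> M \<Longrightarrow> c \<le> r j \<Longrightarrow> 0 < marginal j c"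
proof -
  assume j: "j \<in> M" and c: "c \<le> r j"
  define y where "y = (\<lambda>i. if i = j then c else 0::nat)"
  have y: "y \<in> {y\<in>cells r M. y j = c}" using j c by (auto simp: y_def cells_def)
  then have "0 < \<pi> y" using pos by simp
  also have "\<pi> y \<le> marginal j c"
    unfolding marginal_def using finite_C pos y
    by (intro member_le_sum) (auto intro: less_imp_le)
  finally show ?thesis .
qed

lemma expect_Gmat:
  assumes A: "A \<subseteq> M"
  shows "expect (\<lambda>x. Gmat A x a) = (\<Prod>j\<in>A. marginal j (a j))"
proof -
  define q where "q j c = marginal j c * (if j \<in> A then (if c = a j then 1 else 0) else 1)" for j c
  have fA: "finite A" using A finite_M finite_subset by blast
  have "\<pi> x * Gmat A x a = (\<Prod>j\<in>M. q j (x j))" if x: "x \<in> cells r M" for x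
  proof -
    have "Gmat A x a = (\<Prod>j\<in>M. if j \<in> A then (if x j = a j then 1 else 0) else 1)"
      unfolding Gmat_eq_prod[OF fA] prod.If_cases[OF finite_M] using A by (simp add: Int_absorb1)
    then show ?thesis unfolding pi_eq_prod_marginal[OF x] q_def prod.distrib by simp
  qed
  then have "expect (\<lambda>x. Gmat A x a) = (\<Prod>j\<in>M. \<Sum>c\<in>{0..r j}. q j c)"
    unfolding expect_def using sum_cells_prod[OF finite_M] by simp
  also have "\<dots> = (\<Prod>j\<in>M. if j \<in> A then marginal j (a j) else 1)"
  proof (rule prod.cong[OF refl])
    fix j assume j: "j \<in> M"
    show "(\<Sum>c\<in>{0..r j}. q j c) = (if j \<in> A then marginal j (a j) else 1)"
    proof (cases "j \<in> A")
      case True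
      then have "(\<Sum>c\<in>{0..r j}. q j c) = (\<Sum>c\<in>{0..r j}. if a j = c then marginal j c else 0)"
        unfolding q_def by (intro sum.cong) auto
      also have "\<dots> = marginal j (a j)" using marginal_eq_0[OF j, of "a j"] by (simp add: sum.delta')
      finally show ?thesis using True by simp
    qed (simp add: q_def sum_marginal[OF j])
  qed
  also have "\<dots> = (\<Prod>j\<in>A. marginal j (a j))"
    unfolding prod.If_cases[OF finite_M] using A by (simp add: Int_absorb1)
  finally show ?thesis .
qed

text \<open>For E = A \<inter> u this is P(x_u = b | x_A = a) - P(x_u = b); that it depends on A only
  through E is what makes inclusion-exclusion over the maximal sets possible.\<close>
definition cov_factor :: "(nat \<Rightarrow> nat) \<Rightarrow> (nat \<Rightarrow> nat) \<Rightarrow> nat set \<Rightarrow> nat set \<Rightarrow> real" where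
  "cov_factor a b u E =
     (if \<forall>j\<in>E. a j = b j then \<Prod>j\<in>u - E. marginal j (b j) else 0) - (\<Prod>j\<in>u. marginal j (b j))"

lemma cov_Gmat:
  assumes A: "A \<subseteq> M" and u: "u \<subseteq> M"
  shows "cov (\<lambda>x. Gmat A x a) (\<lambda>x. Gmat u x b) =
    (\<Prod>j\<in>A. marginal j (a j)) * cov_factor a b u (A \<inter> u)"
proof -
  have fA: "finite A" and fu: "finite u" using A u finite_M finite_subset by auto
  have "expect (\<lambda>x. Gmat A x a * Gmat u x b) =
     (if \<forall>j\<in>A \<inter> u. a j = b j then (\<Prod>j\<in>A. marginal j (a j)) * (\<Prod>j\<in>u - A. marginal j (b j)) else 0)"
  proof (cases "\<forall>j\<in>A \<inter> u. a j = b j")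
    case True
    have "expect (\<lambda>x. Gmat A x a * Gmat u x b) =
        (\<Prod>j\<in>A \<union> (u - A). marginal j (if j \<in> A then a j else b j))"
      unfolding Gmat_mult using True A u by (simp add: expect_Gmat)
    also have "\<dots> = (\<Prod>j\<in>A. marginal j (a j)) * (\<Prod>j\<in>u - A. marginal j (b j))"
      using fA fu by (subst prod.union_disjoint) (auto intro!: arg_cong2[where f = "(*)"] prod.cong)
    finally show ?thesis using True by simp
  next
    case False
    then show ?thesis unfolding Gmat_mult if_not_P[OF False] expect_def by simp
  qed
  moreover have "u - A = u - (A \<inter> u)" by blast
  ultimately show ?thesis
    unfolding cov_def expect_Gmat[OF A] expect_Gmat[OF u] cov_factor_def
    by (simp add: algebra_simps)
qed

text \<open>The coefficient of column v when the column (A, a) is expanded by inclusion-exclusion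
  over the sets \<Inter>G \<inter> A, G \<subseteq> K.\<close>
definition replacement_coeff ::
  "nat set set \<Rightarrow> nat set \<Rightarrow> (nat \<Rightarrow> nat) \<Rightarrow> nat set \<times> (nat \<Rightarrow> nat) \<Rightarrow> real" where
  "replacement_coeff K A a v =
     (\<Sum>G\<in>Pne K. if Gcol (\<Inter>G \<inter> A) a = v
                  then - ((-1) ^ card G) * (\<Prod>j\<in>A - \<Inter>G. marginal j (a j)) else 0)"

lemma cov_Gmat_inclusion_exclusion:
  assumes K: "finite K" "m \<in> K" "u \<subseteq> m" and A: "A \<subseteq> M" and u: "u \<subseteq> M"
  shows "cov (\<lambda>x. Gmat A x a) (\<lambda>x. Gmat u x b) =
    (\<Sum>G\<in>Pne K. - ((-1) ^ card G) * (\<Prod>j\<in>A - \<Inter>G. marginal j (a j)) *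
                  cov (\<lambda>x. Gmat (\<Inter>G \<inter> A) x a) (\<lambda>x. Gmat u x b))"
proof -
  have fA: "finite A" using A finite_M finite_subset by blast
  have "cov (\<lambda>x. Gmat A x a) (\<lambda>x. Gmat u x b) =
      (\<Prod>j\<in>A. marginal j (a j)) * (\<Sum>G\<in>Pne K. - ((-1) ^ card G) * cov_factor a b u (\<Inter>G \<inter> (A \<inter> u)))"
  proof -
    have "A \<inter> u \<subseteq> m" using K(3) by blast
    then show ?thesis
      using cov_Gmat[OF A u] sum_Pne_Inter_alternating[OF K(1,2), where \<Phi> = "cov_factor a b u"]
        by simp
  qed
  also have "\<dots> = (\<Sum>G\<in>Pne K. - ((-1) ^ card G) * (\<Prod>j\<in>A - \<Inter>G. marginal j (a j)) *
                  cov (\<lambda>x. Gmat (\<Inter>G \<inter> A) x a) (\<lambda>x. Gmat u x b))"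
    unfolding sum_distrib_left
  proof (rule sum.cong[OF refl])
    fix G
    have "A - (\<Inter>G \<inter> A) = A - \<Inter>G" by blast
    then have "(\<Prod>j\<in>A. marginal j (a j)) =
        (\<Prod>j\<in>A - \<Inter>G. marginal j (a j)) * (\<Prod>j\<in>\<Inter>G \<inter> A. marginal j (a j))"
      using prod.subset_diff[of "\<Inter>G \<inter> A" A "\<lambda>j. marginal j (a j)"] fA by simp
    moreover have "\<Inter>G \<inter> (A \<inter> u) = \<Inter>G \<inter> A \<inter> u" by blast
    moreover have "cov (\<lambda>x. Gmat (\<Inter>G \<inter> A) x a) (\<lambda>x. Gmat u x b) =
        (\<Prod>j\<in>\<Inter>G \<inter> A. marginal j (a j)) * cov_factor a b u (\<Inter>G \<inter> A \<inter> u)"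
      using A u by (intro cov_Gmat) auto
    ultimately show "(\<Prod>j\<in>A. marginal j (a j)) *
          (- ((-1) ^ card G) * cov_factor a b u (\<Inter>G \<inter> (A \<inter> u))) =
        - ((-1) ^ card G) * (\<Prod>j\<in>A - \<Inter>G. marginal j (a j)) *
          cov (\<lambda>x. Gmat (\<Inter>G \<inter> A) x a) (\<lambda>x. Gmat u x b)"
      by (simp add: mult_ac)
  qed
  finally show ?thesis .
qed

lemma cov_Gmat_replacement:
  assumes K: "finite K" "m \<in> K" "u \<subseteq> m" and A: "A \<subseteq> M" and u: "u \<subseteq> M"
    and S: "finite S" "\<forall>G\<in>Pne K. Gcol (\<Inter>G \<inter> A) a \<in> S"
  shows "cov (\<lambda>x. Gmat A x a) (\<lambda>x. Gmat u x b) =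
    (\<Sum>v\<in>S. replacement_coeff K A a v * cov (\<lambda>x. Gfam x v) (\<lambda>x. Gmat u x b))"
proof -
  have "(\<Sum>v\<in>S. replacement_coeff K A a v * cov (\<lambda>x. Gfam x v) (\<lambda>x. Gmat u x b)) =
      (\<Sum>G\<in>Pne K. \<Sum>v\<in>S. if Gcol (\<Inter>G \<inter> A) a = v then - ((-1) ^ card G) *
          (\<Prod>j\<in>A - \<Inter>G. marginal j (a j)) * cov (\<lambda>x. Gfam x v) (\<lambda>x. Gmat u x b) else 0)"
    unfolding replacement_coeff_def sum_distrib_right by (subst sum.swap) (auto intro!: sum.cong)
  also have "\<dots> = (\<Sum>G\<in>Pne K. - ((-1) ^ card G) * (\<Prod>j\<in>A - \<Inter>G. marginal j (a j)) *
                  cov (\<lambda>x. Gmat (\<Inter>G \<inter> A) x a) (\<lambda>x. Gmat u x b))"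
    using S by (intro sum.cong refl) (simp add: sum.delta Gfam_Gcol)
  finally show ?thesis using cov_Gmat_inclusion_exclusion[OF K A u] by simp
qed

lemma replacement_coeff_diag:
  assumes K: "finite K" and disj: "t \<inter> h = {}" and Kbar: "\<forall>G\<in>Kbar K t h. \<Inter>G \<inter> (t \<union> h) \<noteq> t"
  shows "replacement_coeff K (t \<union> h) a (Gcol t a) =
    - of_int (\<Sum>G\<in>Kth K t h. (-1) ^ card G) * (\<Prod>j\<in>h. marginal j (a j))"
proof -
  have Kth: "Kth K t h \<subseteq> Pne K" unfolding Kth_def Kt_def Pne_def by auto
  have "Gcol (\<Inter>G \<inter> (t \<union> h)) a = Gcol t a \<longleftrightarrow> G \<in> Kth K t h" if G: "G \<in> Pne K" for G
  proof (cases "G \<in> Kth K t h")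
    case True
    then show ?thesis using Kth_Inter[OF True] disj unfolding Gcol_eq_Gcol_iff by blast
  next
    case False
    then have "G \<in> Kbar K t h" using G unfolding Kbar_def by blast
    then show ?thesis using Kbar False unfolding Gcol_eq_Gcol_iff by blast
  qed
  moreover have "(t \<union> h) - \<Inter>G = h" if "G \<in> Kth K t h" for G
    using Kth_Inter[OF that] disj by blast
  ultimately have "replacement_coeff K (t \<union> h) a (Gcol t a) =
      (\<Sum>G\<in>Pne K. if G \<in> Kth K t h then - ((-1) ^ card G) * (\<Prod>j\<in>h. marginal j (a j)) else 0)"
    unfolding replacement_coeff_def by (intro sum.cong refl) auto
  also have "\<dots> = (\<Sum>G\<in>Kth K t h. - ((-1) ^ card G) * (\<Prod>j\<in>h. marginal j (a j)))"
    using K Kth by (simp add: sum.If_cases Int_absorb1 Pne_def)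
  finally show ?thesis by (simp add: sum_distrib_right sum_negf)
qed

end

section \<open>The replacement matrix\<close>

locale replacement_setting = independent_cells r M \<pi> for r M \<pi> +
  fixes V I :: "nat set set" and h :: "nat set \<Rightarrow> nat set" and jh :: "nat set \<Rightarrow> nat \<Rightarrow> nat"
    and ord :: "nat set rel"
  assumes V_subset: "V \<subseteq> Pne M" and I_subset: "I \<subseteq> V"
    and h_subset: "\<And>t. t \<in> I \<Longrightarrow> h t \<subseteq> M"
    and h_disjoint: "\<And>t. t \<in> I \<Longrightarrow> t \<inter> h t = {}"
    and jh_range: "\<And>t j. t \<in> I \<Longrightarrow> j \<in> h t \<Longrightarrow> 1 \<le> jh t j \<and> jh t j \<le> r j"
    and jh_zero: "\<And>t j. t \<in> I \<Longrightarrow> j \<notin> h t \<Longrightarrow> jh t j = 0"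
    and alternating_sum_nonzero:
      "\<And>t. t \<in> I \<Longrightarrow> (\<Sum>G\<in>Kth (maximal_sets V) t (h t). (-1::int) ^ card G) \<noteq> 0"
    and ord_subset: "ord \<subseteq> I \<times> I" and ord_strict: "strict_linear_order_on I ord"
    and Kbar_Inter: "\<And>t G. t \<in> I \<Longrightarrow> G \<in> Kbar (maximal_sets V) t (h t) \<Longrightarrow>
      \<Inter>G \<inter> (t \<union> h t) \<in> V - I \<or> (\<Inter>G \<inter> (t \<union> h t) \<in> I \<and> (\<Inter>G \<inter> (t \<union> h t), t) \<in> ord)"
begin

abbreviation "K \<equiv> maximal_sets V"

text \<open>The column k = (t, c) of G_I is replaced by the column of G_{t \<union> h t} with categories
  c on t and jh t on h t.\<close>
definition Hvars :: "nat set \<times> (nat \<Rightarrow> nat) \<Rightarrow> nat set" where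
  "Hvars k = fst k \<union> h (fst k)"

definition Hcats :: "nat set \<times> (nat \<Rightarrow> nat) \<Rightarrow> nat \<Rightarrow> nat" where
  "Hcats k = (\<lambda>j. snd k j + jh (fst k) j)"

definition replacement_matrix :: "nat set \<times> (nat \<Rightarrow> nat) \<Rightarrow> nat set \<times> (nat \<Rightarrow> nat) \<Rightarrow> real" where
  "replacement_matrix v k = replacement_coeff K (Hvars k) (Hcats k) v"

lemma finite_V: "finite V"
proof -
  have "V \<subseteq> Pow M" using V_subset unfolding Pne_def by blast
  then show ?thesis using finite_M by (simp add: finite_subset)
qed

lemma finite_K: "finite K"
  by (rule finite_subset[OF _ finite_V]) (auto simp: maximal_sets_def)

lemma finite_fcols_V:
  assumes "F \<subseteq> V"
  shows "finite (fcols r F)"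
proof (rule finite_fcols[OF finite_M finite_subset[OF assms finite_V]])
  show "\<forall>t\<in>F. t \<subseteq> M" using assms V_subset unfolding Pne_def by blast
qed

lemma mem_fcols_I: 
  assumes "k \<in> fcols r I"
  shows "fst k \<in> I" "\<forall>j\<in>fst k. 1 \<le> snd k j \<and> snd k j \<le> r j" "\<forall>j. j \<notin> fst k \<longrightarrow> snd k j = 0"
  using assms unfolding fcols_def tcols_def by auto

lemma Hvars_subset:
  assumes "k \<in> fcols r I"
  shows "Hvars k \<subseteq> M"
proof -
  have "fst k \<in> Pne M" using mem_fcols_I(1)[OF assms] I_subset V_subset by blast
  then show ?thesis using h_subset[OF mem_fcols_I(1)[OF assms]] unfolding Hvars_def Pne_def by simp
qed

lemma Hcats_eq:
  assumes "k \<in> fcols r I"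
  shows "Hcats k j = (if j \<in> h (fst k) then jh (fst k) j else snd k j)"
  using mem_fcols_I[OF assms] h_disjoint[OF mem_fcols_I(1)[OF assms]]
    jh_zero[OF mem_fcols_I(1)[OF assms]]
  unfolding Hcats_def by auto

lemma Hcats_range:
  assumes "k \<in> fcols r I" "j \<in> Hvars k"
  shows "1 \<le> Hcats k j \<and> Hcats k j \<le> r j"
  using assms mem_fcols_I[OF assms(1)] jh_range[OF mem_fcols_I(1)[OF assms(1)]]
  unfolding Hcats_eq[OF assms(1)] Hvars_def by auto

lemma Gcol_fst_Hcat:
  assumes "k \<in> fcols r I"
  shows "Gcol (fst k) (Hcats k) = k"
proof -
  have "(\<lambda>j. if j \<in> fst k then Hcats k j else 0) = snd k"
    using mem_fcols_I[OF assms] h_disjoint[OF mem_fcols_I(1)[OF assms]] unfolding Hcats_eq[OF assms]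
    by (auto simp: fun_eq_iff)
  then show ?thesis unfolding Gcol_def by simp
qed

lemma GH_eq_Gmat:
  assumes "k \<in> fcols r I"
  shows "GH h jh x k = Gmat (Hvars k) x (Hcats k)"
  using mem_fcols_I[OF assms] h_disjoint[OF mem_fcols_I(1)[OF assms]]
  unfolding GH_def Gmat_mult Hvars_def Gmat_def Hcats_eq[OF assms] by auto

lemma Inter_Hvars_cases:
  assumes k: "k \<in> fcols r I" and G: "G \<in> Pne K"
  obtains "G \<in> Kth K (fst k) (h (fst k))" "\<Inter>G \<inter> Hvars k = fst k"
    | "\<Inter>G \<inter> Hvars k \<in> V - I"
    | "\<Inter>G \<inter> Hvars k \<in> I" "(\<Inter>G \<inter> Hvars k, fst k) \<in> ord"
proof (cases "G \<in> Kth K (fst k) (h (fst k))")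
  case True
  have "\<Inter>G \<inter> Hvars k = fst k" using Kth_Inter[OF True] unfolding Hvars_def by blast
  with True show ?thesis by (rule that(1))
next
  case False
  then have "G \<in> Kbar K (fst k) (h (fst k))" using G unfolding Kbar_def by blast
  then have "\<Inter>G \<inter> Hvars k \<in> V - I \<or> (\<Inter>G \<inter> Hvars k \<in> I \<and> (\<Inter>G \<inter> Hvars k, fst k) \<in> ord)"
    unfolding Hvars_def by (rule Kbar_Inter[OF mem_fcols_I(1)[OF k]])
  then show ?thesis using that(2,3) by metis
qed

lemma replacement_decomposition:
  assumes k: "k \<in> fcols r I" and w: "w \<in> fcols r V"
  shows "cov (\<lambda>x. GH h jh x k) (\<lambda>x. Gfam x w) =
    (\<Sum>v\<in>fcols r V. replacement_matrix v k * cov (\<lambda>x. Gfam x v) (\<lambda>x. Gfam x w))"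
proof -
  obtain u b where wu: "w = (u, b)" "u \<in> V" using w by (auto simp: fcols_def)
  obtain m where m: "m \<in> K" "u \<subseteq> m" using ex_maximal_set[OF finite_V wu(2)] by blast
  have u: "u \<subseteq> M" using wu(2) V_subset by (auto simp: Pne_def)
  have "Gcol (\<Inter>G \<inter> Hvars k) (Hcats k) \<in> fcols r V" if "G \<in> Pne K" for G
  proof (rule Gcol_in_fcols)
    show "\<Inter>G \<inter> Hvars k \<in> V"
      by (rule Inter_Hvars_cases[OF k that]) (use mem_fcols_I(1)[OF k] I_subset in auto)
  qed (use Hcats_range[OF k] in blast)
  then show ?thesis
    unfolding GH_eq_Gmat[OF k] replacement_matrix_def wu Gfam_def fst_conv snd_conv
    using cov_Gmat_replacement[OF finite_K m Hvars_subset[OF k] u finite_fcols_V[OF order_refl]]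
    by (simp add: Gfam_def)
qed

lemma Gfam_columns_independent: "independent_mod_constants (fcols r V) (\<lambda>w x. Gfam x w)"
  unfolding independent_mod_constants_def Gfam_def
  using Gmat_columns_independent[OF finite_M finite_V] V_subset unfolding Pne_def by blast

lemma replacement_triangular: "trivial_kernel_on (fcols r I) replacement_matrix"
proof (rule trivial_kernel_on_triangular[where key = fst and ord = ord])
  show "finite (fcols r I)" using finite_fcols_V[OF I_subset] .
  have "finite ord" using ord_subset finite_subset[OF I_subset finite_V]
    by (auto intro: finite_subset)
  moreover have "acyclic ord"
    using ord_strict unfolding strict_linear_order_on_def acyclic_irrefl by simp
  ultimately show "wf (ord\<inverse>)" by (rule finite_acyclic_wf_converse)
next
  fix v k assume v: "v \<in> fcols r I" and k: "k \<in> fcols r I" and "v \<noteq> k"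
    and nz: "replacement_matrix v k \<noteq> 0"
  have "\<exists>G\<in>Pne K. Gcol (\<Inter>G \<inter> Hvars k) (Hcats k) = v"
  proof (rule ccontr)
    assume "\<not> ?thesis"
    then have "replacement_matrix v k = 0" unfolding replacement_matrix_def replacement_coeff_def
      by (intro sum.neutral) auto
    with nz show False ..
  qed
  then obtain G where G: "G \<in> Pne K" "Gcol (\<Inter>G \<inter> Hvars k) (Hcats k) = v" by blast
  then have s: "\<Inter>G \<inter> Hvars k = fst v" unfolding Gcol_def by auto
  show "(fst v, fst k) \<in> ord"
  proof (rule Inter_Hvars_cases[OF k G(1)])
    assume "\<Inter>G \<inter> Hvars k = fst k"
    then have "v = k" using G(2) Gcol_fst_Hcat[OF k] by simp
    with \<open>v \<noteq> k\<close> show ?thesis ..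
  next
    assume "\<Inter>G \<inter> Hvars k \<in> V - I"
    with s mem_fcols_I(1)[OF v] show ?thesis by simp
  next
    assume "(\<Inter>G \<inter> Hvars k, fst k) \<in> ord"
    with s show ?thesis by simp
  qed
next
  fix k assume k: "k \<in> fcols r I"
  have tI: "fst k \<in> I" using mem_fcols_I(1)[OF k] .
  have irrefl: "(fst k, fst k) \<notin> ord"
    using ord_strict unfolding strict_linear_order_on_def irrefl_def by blast
  have "\<Inter>G \<inter> (fst k \<union> h (fst k)) \<noteq> fst k" if "G \<in> Kbar K (fst k) (h (fst k))" for G
    using Kbar_Inter[OF tI that] tI irrefl by auto
  then have "replacement_matrix k k = - of_int (\<Sum>G\<in>Kth K (fst k) (h (fst k)). (-1) ^ card G) *
      (\<Prod>j\<in>h (fst k). marginal j (Hcats k j))"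
    using replacement_coeff_diag[OF finite_K h_disjoint[OF tI], of "Hcats k"]
    unfolding replacement_matrix_def Hvars_def Gcol_fst_Hcat[OF k] by blast
  moreover have "0 < (\<Prod>j\<in>h (fst k). marginal j (Hcats k j))"
    using Hcats_range[OF k] h_subset[OF tI] marginal_pos unfolding Hvars_def
      by (intro prod_pos) blast
  moreover have "(of_int (\<Sum>G\<in>Kth K (fst k) (h (fst k)). (-1) ^ card G) :: real) \<noteq> 0"
    using alternating_sum_nonzero[OF tI] by (simp only: of_int_eq_0_iff not_False_eq_True)
  ultimately show "replacement_matrix k k \<noteq> 0" by simp
qed

theorem schur_complement_replacement_nonsingular:
  "nonsingular_on (fcols r I) (\<lambda>i k. Fmat (cells r M) \<pi> Gfam (GH h jh) i k -
     (\<Sum>j\<in>fcols r (V - I). \<Sum>l\<in>fcols r (V - I). Fmat (cells r M) \<pi> Gfam Gfam i j *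
        inv_on (fcols r (V - I)) (Fmat (cells r M) \<pi> Gfam Gfam) j l *
        Fmat (cells r M) \<pi> Gfam (GH h jh) l k))"
  unfolding Fmat_eq_cov
proof (rule schur_complement_nonsingular[where f = "\<lambda>w x. Gfam x w" and g = "\<lambda>k x. GH h jh x k"])
  have V: "fcols r V = fcols r I \<union> fcols r (V - I)"
    using I_subset fcols_Un[of r I "V - I"] by (simp add: Un_absorb1)
  show "finite (fcols r I)" "finite (fcols r (V - I))"
    using I_subset by (auto intro: finite_fcols_V)
  show "fcols r I \<inter> fcols r (V - I) = {}" by (rule fcols_disjoint) blast
  show "independent_mod_constants (fcols r I \<union> fcols r (V - I)) (\<lambda>w x. Gfam x w)"
    using Gfam_columns_independent unfolding V .
  show "\<forall>k\<in>fcols r I. \<forall>w\<in>fcols r I \<union> fcols r (V - I). cov (\<lambda>x. GH h jh x k) (\<lambda>x. Gfam x w) =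
      (\<Sum>v\<in>fcols r I \<union> fcols r (V - I). replacement_matrix v k * cov (\<lambda>x. Gfam x v) (\<lambda>x. Gfam x w))"
    unfolding V[symmetric] using replacement_decomposition by blast
qed (rule replacement_triangular)

end

lemma (in independent_cells) valid_replacement_setting:
  assumes V: "V \<subseteq> Pne M" and I: "I \<subseteq> V" and valid: "valid_replacement r M I (V - I) h jh"
  obtains ord where "replacement_setting r M \<pi> V I h jh ord"
proof -
  have IV: "I \<union> (V - I) = V" using I by blast
  have v: "inj_on (\<lambda>t. t \<union> h t) I \<and>
       (\<forall>t\<in>I. h t \<subseteq> M \<and> t \<inter> h t = {} \<and>
              (\<forall>j\<in>h t. 1 \<le> jh t j \<and> jh t j \<le> r j) \<and> (\<forall>j. j \<notin> h t \<longrightarrow> jh t j = 0)) \<and>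
       (\<forall>t\<in>I. (\<Sum>G\<in>Kth (maximal_sets V) t (h t). (-1::int) ^ card G) \<noteq> 0) \<and>
       (\<exists>ord. ord \<subseteq> I \<times> I \<and> strict_linear_order_on I ord \<and>
          (\<forall>s\<in>I. \<forall>t\<in>I. s \<subset> t \<longrightarrow> (s, t) \<in> ord) \<and>
          (\<forall>t\<in>I. \<forall>G\<in>Kbar (maximal_sets V) t (h t).
             \<Inter>G \<inter> (t \<union> h t) \<in> V - I \<or> (\<Inter>G \<inter> (t \<union> h t) \<in> I \<and> (\<Inter>G \<inter> (t \<union> h t), t) \<in> ord)))"
    using valid unfolding valid_replacement_def Let_def IV .
  then obtain ord where ord: "ord \<subseteq> I \<times> I" "strict_linear_order_on I ord"
    "\<forall>t\<in>I. \<forall>G\<in>Kbar (maximal_sets V) t (h t).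
       \<Inter>G \<inter> (t \<union> h t) \<in> V - I \<or> (\<Inter>G \<inter> (t \<union> h t) \<in> I \<and> (\<Inter>G \<inter> (t \<union> h t), t) \<in> ord)"
    by (elim conjE exE)
  have "replacement_setting r M \<pi> V I h jh ord"
    by unfold_locales (use V I v ord in simp_all)
  then show ?thesis by (rule that)
qed

theorem theorem2:
  fixes d :: nat and r :: "nat \<Rightarrow> nat" and M :: "nat set"
    and \<pi> :: "(nat \<Rightarrow> nat) \<Rightarrow> real"
    and \<N> :: "nat set set" and a b :: "nat set"
    and I :: "nat set set"
    and h :: "nat set \<Rightarrow> nat set" and jh :: "nat set \<Rightarrow> nat \<Rightarrow> nat"
  defines "C \<equiv> cells r M"
  defines "V \<equiv> (\<Union>N\<in>\<N>. Pne N)"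
  defines "\<A> \<equiv> {t. t \<subseteq> M \<and> t \<inter> a \<noteq> {} \<and> t \<inter> b \<noteq> {}}"
  defines "R \<equiv> V - I"
  defines "SI \<equiv> fcols r I"
  defines "SR \<equiv> fcols r R"
  defines "F_IH \<equiv> Fmat C \<pi> Gfam (GH h jh)"
    and "F_IR \<equiv> Fmat C \<pi> Gfam Gfam"
    and "F_RR \<equiv> Fmat C \<pi> Gfam Gfam"
    and "F_RH \<equiv> Fmat C \<pi> Gfam (GH h jh)"
  assumes M_sub: "M \<subseteq> {1..d}"
    and pos: "\<forall>x\<in>C. \<pi> x > 0"
    and tot: "(\<Sum>x\<in>C. \<pi> x) = 1"
    and indep: "\<forall>x\<in>C. \<pi> x = (\<Prod>j\<in>M. \<Sum>y\<in>{y\<in>C. y j = x j}. \<pi> y)"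
    and N_proper: "\<forall>N\<in>\<N>. N \<subset> M"
    and ab: "a \<subseteq> M" "b \<subseteq> M" "a \<inter> b = {}" "a \<noteq> {}" "b \<noteq> {}"
    and I_sub: "I \<subseteq> V \<inter> \<A>"
    and valid: "valid_replacement r M I R h jh"
  shows "nonsingular_on SI
           (\<lambda>i k. F_IH i k - (\<Sum>j\<in>SR. \<Sum>l\<in>SR.
                     F_IR i j * inv_on SR F_RR j l * F_RH l k))"
proof -
  have finite_M: "finite M" by (rule finite_subset[OF M_sub]) simp
  interpret independent_cells r M \<pi>
    by unfold_locales (use finite_M pos tot indep in \<open>simp_all add: C_def finite_cells\<close>)
  have V_subset: "V \<subseteq> Pne M" using N_proper unfolding V_def Pne_def by blast
  have I_subset: "I \<subseteq> V" using I_sub by blast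
  obtain ord where "replacement_setting r M \<pi> V I h jh ord"
    using valid_replacement_setting[OF V_subset I_subset] valid unfolding R_def by blast
  then interpret replacement_setting r M \<pi> V I h jh ord .
  show ?thesis
    unfolding F_IH_def F_IR_def F_RR_def F_RH_def C_def SI_def SR_def R_def
    by (rule schur_complement_replacement_nonsingular)
qed

end
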